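(* The $\lambda es$-calculus enjoys PSN: every $\lambda$-term that is $\beta$-strongly normalizing is strongly normalizing for $\to_{\lambda es}$.
   Context: Terms are generated by $t,u::= x\mid \lambda x.t\mid t\,u\mid t[x/u]$; $\lambda x.t$ and $t[x/u]$ bind $x$ in $t$ (not in $u$), and terms are considered modulo $\alpha$-conversion. $\lambda$-terms are those without explicit substitutions $[x/u]$. $\mathrm{fv}(t)$ is the set of free variables and $t\{x/u\}$ capture-avoiding meta-level substitution. The $\lambda es$-calculus has the following rules closed under all contexts: $({\tt B})$ $(\lambda x.t)u\to t[x/u]$; $({\tt d}')$ $x[x/u]\to u$; $({\tt w})$ $t[x/u]\to t$ if $x\notin\mathrm{fv}(t)$; $(@_r)$ $(t\,v)[x/u]\to t\,(v[x/u])$ if $x\notin\mathrm{fv}(t)$, $x\in\mathrm{fv}(v)$; $(@_l)$ $(t\,v)[x/u]\to t[x/u]\,v$ if $x\in\mathrm{fv}(t)$, $x\notin\mathrm{fv}(v)$; $(@)$ $(t\,v)[x/u]\to t[x/u]\,v[x/u]$ if $x\in\mathrm{fv}(t)$ and $x\in\mathrm{fv}(v)$; $(\lambda)$ $(\lambda y.t)[x/u]\to\lambda y.(t[x/u])$ (with $y\notin\mathrm{fv}(u)$ by $\alpha$); $({\tt comp}_1)$ $t[x/u][y/v]\to t[x/u[y/v]]$ if $y\notin\mathrm{fv}(t)$, $y\in\mathrm{fv}(u)$; $({\tt comp}_2)$ $t[x/u][y/v]\to t[y/v][x/u[y/v]]$ if $y\in\mathrm{fv}(t)$, $y\in\mathrm{fv}(u)$;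 all modulo the equivalence $\equiv_{\tt CS}$, the smallest equivalence closed under contexts containing $t[x/u][y/v]\sim t[y/v][x/u]$ if $y\notin\mathrm{fv}(u)$, $x\notin\mathrm{fv}(v)$, $x\neq y$. $\beta$-reduction is the contextual closure of $(\lambda x.t)u\to t\{x/u\}$. *)

theory Defs
  imports Main
begin

text \<open>Terms modulo alpha-conversion, represented with de Bruijn indices.
  In Sub t u (the explicit substitution t[x/u]) the bound variable x is index 0 of t;
  u lies outside the binder.\<close>

datatype trm = Var nat | Lam trm | App trm trm | Sub trm trm

fun fv :: "trm \<Rightarrow> nat set" where
  "fv (Var i) = {i}"
| "fv (Lam t) = {i. Suc i \<in> fv t}"
| "fv (App t u) = fv t \<union> fv u"
| "fv (Sub t u) = {i. Suc i \<in> fv t} \<union> fv u"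

fun is_lambda :: "trm \<Rightarrow> bool" where
  "is_lambda (Var i) = True"
| "is_lambda (Lam t) = is_lambda t"
| "is_lambda (App t u) = (is_lambda t \<and> is_lambda u)"
| "is_lambda (Sub t u) = False"

fun lift :: "nat \<Rightarrow> trm \<Rightarrow> trm" where
  "lift k (Var i) = (if i < k then Var i else Var (Suc i))"
| "lift k (Lam t) = Lam (lift (Suc k) t)"
| "lift k (App t u) = App (lift k t) (lift k u)"
| "lift k (Sub t u) = Sub (lift (Suc k) t) (lift k u)"

text \<open>decr k t: remove the (unused) free index k, decrementing indices > k.\<close>
fun decr :: "nat \<Rightarrow> trm \<Rightarrow> trm" where
  "decr k (Var i) = (if i \<le> k then Var i else Var (i - 1))"
| "decr k (Lam t) = Lam (decr (Suc k) t)"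
| "decr k (App t u) = App (decr k t) (decr k u)"
| "decr k (Sub t u) = Sub (decr (Suc k) t) (decr k u)"

fun swap :: "nat \<Rightarrow> trm \<Rightarrow> trm" where
  "swap k (Var i) = (if i = k then Var (Suc k) else if i = Suc k then Var k else Var i)"
| "swap k (Lam t) = Lam (swap (Suc k) t)"
| "swap k (App t u) = App (swap k t) (swap k u)"
| "swap k (Sub t u) = Sub (swap (Suc k) t) (swap k u)"

fun subst :: "trm \<Rightarrow> nat \<Rightarrow> trm \<Rightarrow> trm" where
  "subst (Var i) k s = (if k < i then Var (i - 1) else if i = k then s else Var i)"
| "subst (Lam t) k s = Lam (subst t (Suc k) (lift 0 s))"
| "subst (App t u) k s = App (subst t k s) (subst u k s)"
| "subst (Sub t u) k s = Sub (subst t (Suc k) (lift 0 s)) (subst u k s)"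

inductive ctx :: "(trm \<Rightarrow> trm \<Rightarrow> bool) \<Rightarrow> trm \<Rightarrow> trm \<Rightarrow> bool" for R where
  root: "R t t' \<Longrightarrow> ctx R t t'"
| lam: "ctx R t t' \<Longrightarrow> ctx R (Lam t) (Lam t')"
| appl: "ctx R t t' \<Longrightarrow> ctx R (App t u) (App t' u)"
| appr: "ctx R u u' \<Longrightarrow> ctx R (App t u) (App t u')"
| subl: "ctx R t t' \<Longrightarrow> ctx R (Sub t u) (Sub t' u)"
| subr: "ctx R u u' \<Longrightarrow> ctx R (Sub t u) (Sub t u')"

inductive beta_rule :: "trm \<Rightarrow> trm \<Rightarrow> bool" where
  "beta_rule (App (Lam t) u) (subst t 0 u)"

definition beta :: "trm \<Rightarrow> trm \<Rightarrow> bool" where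
  "beta = ctx beta_rule"

inductive es_rule :: "trm \<Rightarrow> trm \<Rightarrow> bool" where
  B:     "es_rule (App (Lam t) u) (Sub t u)"
| d':    "es_rule (Sub (Var 0) u) u"
| w:     "0 \<notin> fv t \<Longrightarrow> es_rule (Sub t u) (decr 0 t)"
| app_r: "0 \<notin> fv t \<Longrightarrow> 0 \<in> fv v \<Longrightarrow> es_rule (Sub (App t v) u) (App (decr 0 t) (Sub v u))"
| app_l: "0 \<in> fv t \<Longrightarrow> 0 \<notin> fv v \<Longrightarrow> es_rule (Sub (App t v) u) (App (Sub t u) (decr 0 v))"
| app:   "0 \<in> fv t \<Longrightarrow> 0 \<in> fv v \<Longrightarrow> es_rule (Sub (App t v) u) (App (Sub t u) (Sub v u))"
| lam:   "es_rule (Sub (Lam t) u) (Lam (Sub (swap 0 t) (lift 0 u)))"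
| comp1: "1 \<notin> fv t \<Longrightarrow> 0 \<in> fv u \<Longrightarrow> es_rule (Sub (Sub t u) v) (Sub (decr 1 t) (Sub u v))"
| comp2: "1 \<in> fv t \<Longrightarrow> 0 \<in> fv u \<Longrightarrow>
            es_rule (Sub (Sub t u) v) (Sub (Sub (swap 0 t) (lift 0 v)) (Sub u v))"

text \<open>The CS axiom t[x/u][y/v] ~ t[y/v][x/u] (y not free in u; x not free in v is automatic).\<close>
inductive cs_rule :: "trm \<Rightarrow> trm \<Rightarrow> bool" where
  "0 \<notin> fv u \<Longrightarrow> cs_rule (Sub (Sub t u) v) (Sub (Sub (swap 0 t) (lift 0 v)) (decr 0 u))"

definition cs_eq :: "trm \<Rightarrow> trm \<Rightarrow> bool" where
  "cs_eq = equivclp (ctx cs_rule)"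

definition es_red :: "trm \<Rightarrow> trm \<Rightarrow> bool" where
  "es_red t t' \<longleftrightarrow> (\<exists>s s'. cs_eq t s \<and> ctx es_rule s s' \<and> cs_eq s' t')"

definition SN :: "(trm \<Rightarrow> trm \<Rightarrow> bool) \<Rightarrow> trm \<Rightarrow> bool" where
  "SN R t \<longleftrightarrow> Wellfounded.accp (conversep R) t"

end

theory Submission
  imports Defs "HOL-Library.Multiset" "HOL-Library.Function_Algebras"
begin

(* The proof goes through a quantitative, non-idempotent intersection type system in which a
   typing derivation carries a size n \<in> nat.
   (1) Soundness: if t is typable then every lambda-es step from t yields a typable term, the
       size of the derivation strictly decreases along B, d' and w, and never increases along the
       propagation rules (@_r, @_l, @, lambda, comp1, comp2) or along CS-equivalence.  The
       propagation rules strictly decrease a purely syntactic weight of the explicit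
       substitutions, which CS-equivalence preserves; hence the pair (size, weight) decreases
       lexicographically at every step and typable terms are lambda-es strongly normalising.
   (2) Completeness: every beta-strongly normalising lambda-term is typable; this is proved by
       induction on beta-reduction and the subterm order, using subject expansion for head
       beta-redexes (an anti-substitution lemma), and typing neutral terms at every type. *)

section \<open>Renamings\<close>

text \<open>The operations lift, swap and decr of the definitions are all renamings of free indices;
  treating them uniformly lets us prove their typing properties once.\<close>

definition up :: "(nat \<Rightarrow> nat) \<Rightarrow> nat \<Rightarrow> nat" where
  "up f = case_nat 0 (\<lambda>i. Suc (f i))"

lemma up_simps [simp]: "up f 0 = 0" "up f (Suc i) = Suc (f i)"
  by (auto simp: up_def)

fun ren :: "(nat \<Rightarrow> nat) \<Rightarrow> trm \<Rightarrow> trm" where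
  "ren f (Var i) = Var (f i)"
| "ren f (Lam t) = Lam (ren (up f) t)"
| "ren f (App t u) = App (ren f t) (ren f u)"
| "ren f (Sub t u) = Sub (ren (up f) t) (ren f u)"

lemma up_id [simp]: "up (\<lambda>i. i) = (\<lambda>i. i)"
  by (rule ext) (simp add: up_def split: nat.split)

lemma ren_id [simp]: "ren (\<lambda>i. i) t = t"
  by (induction t) auto

definition lift_idx :: "nat \<Rightarrow> nat \<Rightarrow> nat" where
  "lift_idx k i = (if i < k then i else Suc i)"

definition swap_idx :: "nat \<Rightarrow> nat \<Rightarrow> nat" where
  "swap_idx k i = (if i = k then Suc k else if i = Suc k then k else i)"

definition decr_idx :: "nat \<Rightarrow> nat \<Rightarrow> nat" where
  "decr_idx k i = (if i \<le> k then i else i - 1)"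

lemma lift_ren: "lift k t = ren (lift_idx k) t"
proof -
  have "up (lift_idx k) = lift_idx (Suc k)" for k
    by (rule ext) (auto simp: up_def lift_idx_def split: nat.split)
  then show ?thesis by (induction t arbitrary: k) (auto simp: lift_idx_def)
qed

lemma swap_ren: "swap k t = ren (swap_idx k) t"
proof -
  have "up (swap_idx k) = swap_idx (Suc k)" for k
    by (rule ext) (auto simp: up_def swap_idx_def split: nat.split)
  then show ?thesis by (induction t arbitrary: k) (auto simp: swap_idx_def)
qed

lemma decr_ren: "decr k t = ren (decr_idx k) t"
proof -
  have "up (decr_idx k) = decr_idx (Suc k)" for k
    by (rule ext) (auto simp: up_def decr_idx_def split: nat.split)
  then show ?thesis by (induction t arbitrary: k) (auto simp: decr_idx_def)
qed

lemma swap_swap [simp]: "swap k (swap k t) = t"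
  by (induction t arbitrary: k) auto

lemma decr_lift [simp]: "decr k (lift k t) = t"
  by (induction t arbitrary: k) auto

lemma lift_decr: "k \<notin> fv t \<Longrightarrow> lift k (decr k t) = t"
  by (induction t arbitrary: k) auto

lemma fv_lift: "i \<in> fv (lift k t) \<longleftrightarrow> (i < k \<and> i \<in> fv t) \<or> (k < i \<and> i - 1 \<in> fv t)"
proof (induction t arbitrary: k i)
  case (Lam t)
  show ?case by (auto simp: Lam)
next
  case (Sub t u)
  show ?case by (auto simp: Sub)
qed auto

text \<open>The CS axiom is symmetric (up to the identities above), so CS-equivalence is just the
  reflexive-transitive closure of one-step CS rewriting.\<close>

lemma cs_rule_sym: "cs_rule s s' \<Longrightarrow> cs_rule s' s"
proof (induction rule: cs_rule.induct)
  case (1 u t v)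
  have "0 \<notin> fv (lift 0 v)" by (simp add: fv_lift)
  then have "cs_rule (Sub (Sub (swap 0 t) (lift 0 v)) (decr 0 u))
     (Sub (Sub (swap 0 (swap 0 t)) (lift 0 (decr 0 u))) (decr 0 (lift 0 v)))"
    by (rule cs_rule.intros)
  then show ?case using 1 by (simp add: lift_decr)
qed

lemma ctx_sym: "(\<And>a b. R a b \<Longrightarrow> R b a) \<Longrightarrow> ctx R s s' \<Longrightarrow> ctx R s' s"
  by (erule ctx.induct) (blast intro: ctx.intros)+

lemma cs_eq_rtranclp: "cs_eq s s' \<Longrightarrow> (ctx cs_rule)\<^sup>*\<^sup>* s s'"
proof -
  have "symclp (ctx cs_rule) = ctx cs_rule"
    using ctx_sym[of cs_rule, OF cs_rule_sym] by (auto simp: symclp_def fun_eq_iff)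
  then show "cs_eq s s' \<Longrightarrow> (ctx cs_rule)\<^sup>*\<^sup>* s s'"
    by (simp add: cs_eq_def equivclp_def)
qed

inductive consume_rule :: "trm \<Rightarrow> trm \<Rightarrow> bool" where
  B:  "consume_rule (App (Lam t) u) (Sub t u)"
| d': "consume_rule (Sub (Var 0) u) u"
| w:  "0 \<notin> fv t \<Longrightarrow> consume_rule (Sub t u) (decr 0 t)"

inductive prop_rule :: "trm \<Rightarrow> trm \<Rightarrow> bool" where
  app_r: "0 \<notin> fv t \<Longrightarrow> 0 \<in> fv v \<Longrightarrow> prop_rule (Sub (App t v) u) (App (decr 0 t) (Sub v u))"
| app_l: "0 \<in> fv t \<Longrightarrow> 0 \<notin> fv v \<Longrightarrow> prop_rule (Sub (App t v) u) (App (Sub t u) (decr 0 v))"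
| app:   "0 \<in> fv t \<Longrightarrow> 0 \<in> fv v \<Longrightarrow> prop_rule (Sub (App t v) u) (App (Sub t u) (Sub v u))"
| lam:   "prop_rule (Sub (Lam t) u) (Lam (Sub (swap 0 t) (lift 0 u)))"
| comp1: "1 \<notin> fv t \<Longrightarrow> 0 \<in> fv u \<Longrightarrow> prop_rule (Sub (Sub t u) v) (Sub (decr 1 t) (Sub u v))"
| comp2: "1 \<in> fv t \<Longrightarrow> 0 \<in> fv u \<Longrightarrow>
            prop_rule (Sub (Sub t u) v) (Sub (Sub (swap 0 t) (lift 0 v)) (Sub u v))"

lemma ctx_es_rule_split: "ctx es_rule s s' \<Longrightarrow> ctx consume_rule s s' \<or> ctx prop_rule s s'"
proof (induction rule: ctx.induct)
  case (root t t')
  then have "consume_rule t t' \<or> prop_rule t t'"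
    by cases (blast intro: consume_rule.intros prop_rule.intros)+
  then show ?case by (blast intro: ctx.root)
qed (blast intro: ctx.intros)+

section \<open>A weight decreased by the propagation rules\<close>

text \<open>occ t z counts the occurrences of index z in t, where an occurrence inside the argument u
  of t[x/u] counts once for every copy of u that propagation will eventually create
  (i.e. max 1 (occ t 0) times).  spine t is the length of the left spine of t up to the
  first variable, ignoring substitutions.  depths t z sums the depths of the counted
  occurrences of z.\<close>

fun occ :: "trm \<Rightarrow> nat \<Rightarrow> nat" where
  "occ (Var i) z = (if i = z then 1 else 0)"
| "occ (Lam t) z = occ t (Suc z)"
| "occ (App t u) z = occ t z + occ u z"
| "occ (Sub t u) z = occ t (Suc z) + max 1 (occ t 0) * occ u z"

fun spine :: "trm \<Rightarrow> nat" where
  "spine (Var i) = 0"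
| "spine (Lam t) = Suc (spine t)"
| "spine (App t u) = Suc (spine t)"
| "spine (Sub t u) = spine t"

fun depths :: "trm \<Rightarrow> nat \<Rightarrow> nat" where
  "depths (Var i) z = 0"
| "depths (Lam t) z = depths t (Suc z) + occ t (Suc z)"
| "depths (App t u) z = depths t z + depths u z + occ t z + occ u z"
| "depths (Sub t u) z = depths t (Suc z)
     + (if occ t 0 = 0 then Suc (spine t) else depths t 0 + occ t 0) * occ u z
     + max 1 (occ t 0) * depths u z"

text \<open>copies t is the number of copies of u that propagating t[x/u] produces, and cost t
  measures how far one copy can still travel inside t: the total depth of the occurrences of x,
  or, if x does not occur in t, the length of the left spine of t.\<close>

definition copies :: "trm \<Rightarrow> nat" where
  "copies t = max 1 (occ t 0)"

definition cost :: "trm \<Rightarrow> nat" where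
  "cost t = (if occ t 0 = 0 then Suc (spine t) else depths t 0 + occ t 0)"

lemma occ_Sub [simp]: "occ (Sub t u) z = occ t (Suc z) + copies t * occ u z"
  by (simp add: copies_def)

lemma depths_Sub [simp]: "depths (Sub t u) z = depths t (Suc z) + cost t * occ u z + copies t * depths u z"
  by (simp add: cost_def copies_def)

declare occ.simps(4) [simp del] depths.simps(4) [simp del]

fun weight :: "trm \<Rightarrow> nat" where
  "weight (Var i) = 0"
| "weight (Lam t) = weight t"
| "weight (App t u) = weight t + weight u"
| "weight (Sub t u) = weight t + cost t + copies t * weight u"

lemma occ_eq_0_iff: "occ t z = 0 \<longleftrightarrow> z \<notin> fv t"
  by (induction t arbitrary: z) (auto simp: copies_def)

lemma depths_eq_0: "z \<notin> fv t \<Longrightarrow> depths t z = 0"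
  by (induction t arbitrary: z) (auto simp: occ_eq_0_iff)

lemma spine_lift [simp]: "spine (lift k t) = spine t"
  by (induction t arbitrary: k) auto

lemma spine_swap [simp]: "spine (swap k t) = spine t"
  by (induction t arbitrary: k) auto

lemma spine_decr [simp]: "spine (decr k t) = spine t"
  by (induction t arbitrary: k) auto

lemma occ_lift: "occ (lift k t) z = (if z < k then occ t z else if z = k then 0 else occ t (z - 1))"
  by (induction t arbitrary: k z) (auto simp: copies_def)

lemma depths_lift: "depths (lift k t) z = (if z < k then depths t z else if z = k then 0 else depths t (z - 1))"
  by (induction t arbitrary: k z) (auto simp: copies_def cost_def occ_lift)

lemma weight_lift [simp]: "weight (lift k t) = weight t"
  by (induction t arbitrary: k) (auto simp: copies_def cost_def occ_lift depths_lift)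

lemma occ_swap: "occ (swap k t) z = occ t (swap_idx k z)"
  by (induction t arbitrary: k z) (auto simp: copies_def swap_idx_def)

lemma depths_swap: "depths (swap k t) z = depths t (swap_idx k z)"
  by (induction t arbitrary: k z) (auto simp: copies_def cost_def occ_swap swap_idx_def)

lemma weight_swap [simp]: "weight (swap k t) = weight t"
  by (induction t arbitrary: k) (auto simp: copies_def cost_def occ_swap depths_swap swap_idx_def)

lemma occ_decr: "k \<notin> fv t \<Longrightarrow> occ (decr k t) z = occ t (lift_idx k z)"
  by (induction t arbitrary: k z) (auto simp: copies_def lift_idx_def)

lemma depths_decr: "k \<notin> fv t \<Longrightarrow> depths (decr k t) z = depths t (lift_idx k z)"
  by (induction t arbitrary: k z) (auto simp: copies_def cost_def occ_decr lift_idx_def)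

lemma weight_decr [simp]: "k \<notin> fv t \<Longrightarrow> weight (decr k t) = weight t"
  by (induction t arbitrary: k) (auto simp: copies_def cost_def occ_decr depths_decr lift_idx_def)

text \<open>A propagation step keeps occurrence counts, depths and spine (so it does not change the
  cost of an enclosing substitution) and strictly decreases the weight; a CS step keeps all of
  them.\<close>

definition same_shape :: "trm \<Rightarrow> trm \<Rightarrow> bool" where
  "same_shape s s' \<longleftrightarrow> (\<forall>z. occ s' z = occ s z) \<and> (\<forall>z. depths s' z = depths s z) \<and> spine s' = spine s"

lemma idx_simps [simp]:
  "lift_idx 0 z = Suc z" "lift_idx (Suc 0) 0 = 0" "lift_idx (Suc 0) (Suc z) = Suc (Suc z)"
  "swap_idx 0 0 = Suc 0" "swap_idx 0 (Suc 0) = 0" "swap_idx 0 (Suc (Suc z)) = Suc (Suc z)"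
  by (auto simp: lift_idx_def swap_idx_def)

lemma occ_pos: "z \<in> fv t \<Longrightarrow> 0 < occ t z"
  using occ_eq_0_iff by blast

lemma max_Suc_0: "max (Suc 0) a = (if a = 0 then 1 else a)"
  by simp

lemma prop_rule_weight: "prop_rule s s' \<Longrightarrow> same_shape s s' \<and> weight s' < weight s"
  unfolding same_shape_def
  by (induction rule: prop_rule.induct)
    (auto simp: occ_decr depths_decr occ_lift depths_lift occ_swap depths_swap cost_def copies_def
      occ_eq_0_iff occ_pos depths_eq_0 max_Suc_0 algebra_simps)

lemma cs_rule_weight: "cs_rule s s' \<Longrightarrow> same_shape s s' \<and> weight s' = weight s"
  unfolding same_shape_def
  by (induction rule: cs_rule.induct)
    (auto simp: occ_decr depths_decr occ_lift depths_lift occ_swap depths_swap cost_def copies_def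
      occ_eq_0_iff occ_pos depths_eq_0 max_Suc_0 algebra_simps)

lemma ctx_prop_rule_weight: "ctx prop_rule s s' \<Longrightarrow> weight s' < weight s"
proof -
  have "ctx prop_rule s s' \<Longrightarrow> same_shape s s' \<and> weight s' < weight s"
  proof (induction rule: ctx.induct)
    case (root t t')
    then show ?case by (rule prop_rule_weight)
  qed (auto simp: same_shape_def cost_def copies_def)
  then show "ctx prop_rule s s' \<Longrightarrow> weight s' < weight s" by blast
qed

lemma cs_eq_weight: "cs_eq s s' \<Longrightarrow> weight s' = weight s"
proof -
  have step: "ctx cs_rule s s' \<Longrightarrow> same_shape s s' \<and> weight s' = weight s" for s s'
  proof (induction rule: ctx.induct)
    case (root t t')
    then show ?case by (rule cs_rule_weight)
  qed (auto simp: same_shape_def cost_def copies_def)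
  show "cs_eq s s' \<Longrightarrow> weight s' = weight s"
    by (drule cs_eq_rtranclp, induction rule: rtranclp_induct) (auto dest: step)
qed

section \<open>Non-idempotent intersection types\<close>

text \<open>Types are built from an atom and arrows whose domain is a finite multiset of types
  (a non-idempotent intersection).\<close>

datatype ty = Atom | Arr "ty multiset" ty

type_synonym env = "nat \<Rightarrow> ty multiset"

text \<open>Environments are added with the pointwise sum of functions.  Its pointwise evaluation is
  removed from the simplifier: otherwise sums of (eta-expanded) environment variables in
  induction cases would be unfolded into lambda-terms and no longer match the typing rules.\<close>

declare plus_fun_apply [simp del] zero_fun_apply [simp del]

definition env_le :: "env \<Rightarrow> env \<Rightarrow> bool" (infix "\<preceq>" 50) where
  "G \<preceq> D \<longleftrightarrow> (\<forall>i. G i \<subseteq># D i)"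

definition env_tl :: "env \<Rightarrow> env" where
  "env_tl G = (\<lambda>i. G (Suc i))"

lemma env_le_refl [simp]: "G \<preceq> G"
  by (simp add: env_le_def)

lemma env_le_trans [trans]: "A \<preceq> B \<Longrightarrow> B \<preceq> C \<Longrightarrow> A \<preceq> C"
  unfolding env_le_def using subset_mset.order_trans by blast

lemma zero_env_le [simp]: "0 \<preceq> G"
  by (simp add: env_le_def zero_fun_apply)

lemma env_le_add_mono: "A \<preceq> A' \<Longrightarrow> B \<preceq> B' \<Longrightarrow> A + B \<preceq> A' + B'"
  unfolding env_le_def by (auto simp: plus_fun_apply intro: subset_mset.add_mono)

lemma env_le_addL: "A \<preceq> A + B" and env_le_addR: "B \<preceq> A + B"
  unfolding env_le_def by (auto simp: plus_fun_apply)

lemma env_le_add_trans: "A + B \<preceq> G \<Longrightarrow> A \<preceq> G" "A + B \<preceq> G \<Longrightarrow> B \<preceq> G"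
  by (meson env_le_addL env_le_addR env_le_trans)+

lemma env_le_add4: "A + B \<preceq> G \<Longrightarrow> C + D \<preceq> H \<Longrightarrow> (A + C) + (B + D) \<preceq> G + H"
  using env_le_add_mono[of "A + B" G "C + D" H] by (simp add: add_ac)

lemma case_nat_env_tl [simp]: "case_nat (G 0) (env_tl G) = G"
  by (rule ext) (auto simp: env_tl_def split: nat.split)

lemma env_tl_add [simp]: "env_tl (G + H) = env_tl G + env_tl H"
  by (simp add: env_tl_def fun_eq_iff plus_fun_apply)

lemma case_nat_add: "case_nat A G + case_nat B H = case_nat (A + B) (G + H)"
  by (rule ext) (auto simp: plus_fun_apply split: nat.split)

lemma env_le_case_nat_iff: "D \<preceq> case_nat M G \<longleftrightarrow> D 0 \<subseteq># M \<and> env_tl D \<preceq> G"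
  unfolding env_le_def env_tl_def by (metis nat.exhaust nat.simps(4,5))

lemma env_le_tl: "D \<preceq> G \<Longrightarrow> env_tl D \<preceq> env_tl G"
  by (simp add: env_le_def env_tl_def)

lemma case_nat_mono: "A \<subseteq># B \<Longrightarrow> G \<preceq> H \<Longrightarrow> case_nat A G \<preceq> case_nat B H"
  by (simp add: env_le_case_nat_iff env_tl_def)

text \<open>The quantitative typing judgements: typed G t \<tau> n says that t has type \<tau> in G with a
  derivation of size n (counting variable and abstraction/application nodes), and
  mtyped G u M n types u once with every element of the multiset M, sizes being added.\<close>

inductive typed :: "env \<Rightarrow> trm \<Rightarrow> ty \<Rightarrow> nat \<Rightarrow> bool"
  and mtyped :: "env \<Rightarrow> trm \<Rightarrow> ty multiset \<Rightarrow> nat \<Rightarrow> bool" where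
  tVar: "\<tau> \<in># G i \<Longrightarrow> typed G (Var i) \<tau> (Suc 0)"
| tLam: "typed (case_nat M G) t \<tau> n \<Longrightarrow> typed G (Lam t) (Arr M \<tau>) (Suc n)"
| tApp: "typed G1 t (Arr M \<tau>) n \<Longrightarrow> M \<noteq> {#} \<Longrightarrow> mtyped G2 u M m \<Longrightarrow> G1 + G2 \<preceq> G
          \<Longrightarrow> typed G (App t u) \<tau> (Suc (n + m))"
| tSub: "typed (case_nat M G1) t \<tau> n \<Longrightarrow> M \<noteq> {#} \<Longrightarrow> mtyped G2 u M m \<Longrightarrow> G1 + G2 \<preceq> G
          \<Longrightarrow> typed G (Sub t u) \<tau> (n + m)"
| mEmp: "mtyped G u {#} 0"
| mAdd: "typed G1 u \<sigma> n \<Longrightarrow> mtyped G2 u M m \<Longrightarrow> G1 + G2 \<preceq> G \<Longrightarrow> mtyped G u (add_mset \<sigma> M) (n + m)"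

inductive_cases typed_VarE: "typed G (Var i) \<tau> n"
inductive_cases typed_LamE: "typed G (Lam t) \<tau> n"
inductive_cases typed_AppE: "typed G (App t u) \<tau> n"
inductive_cases typed_SubE: "typed G (Sub t u) \<tau> n"
inductive_cases mtyped_emptyE: "mtyped G u {#} n"

lemma typed_pos: "typed G t \<tau> n \<Longrightarrow> 0 < n"
  and mtyped_pos: "mtyped G t M n \<Longrightarrow> M \<noteq> {#} \<Longrightarrow> 0 < n"
  by (induction rule: typed_mtyped.inducts) auto

lemma env_le_nonempty: "G1 + G2 \<preceq> G \<Longrightarrow> G1 i \<noteq> {#} \<or> G2 i \<noteq> {#} \<Longrightarrow> G i \<noteq> {#}"
  unfolding env_le_def by (metis plus_fun_apply subset_mset.le_zero_eq union_eq_empty)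

lemma typed_fv: "typed G t \<tau> n \<Longrightarrow> i \<in> fv t \<Longrightarrow> G i \<noteq> {#}"
  and mtyped_fv: "mtyped G t M n \<Longrightarrow> M \<noteq> {#} \<Longrightarrow> i \<in> fv t \<Longrightarrow> G i \<noteq> {#}"
proof (induction arbitrary: i and i rule: typed_mtyped.inducts)
  case (tApp G1 t M \<tau> n G2 u m G)
  then show ?case using env_le_nonempty[OF tApp.hyps(4)] by auto
next
  case (tSub M G1 t \<tau> n G2 u m G)
  then show ?case using env_le_nonempty[OF tSub.hyps(4)] by fastforce
next
  case (mAdd G1 u \<sigma> n G2 M m G)
  then show ?case using env_le_nonempty[OF mAdd.hyps(3)] by blast
qed fastforce+

definition env_ren :: "(nat \<Rightarrow> nat) \<Rightarrow> nat set \<Rightarrow> env \<Rightarrow> env" where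
  "env_ren f S G = (\<lambda>j. if j \<in> f ` S then G (the_inv_into S f j) else {#})"

lemma env_ren_apply: "inj_on f S \<Longrightarrow> i \<in> S \<Longrightarrow> env_ren f S G (f i) = G i"
  by (auto simp: env_ren_def the_inv_into_f_f)

lemma env_ren_le: "inj_on f S \<Longrightarrow> G1 + G2 \<preceq> G \<Longrightarrow> \<forall>i\<in>S. G i \<subseteq># G' (f i) \<Longrightarrow>
   env_ren f S G1 + env_ren f S G2 \<preceq> G'"
  unfolding env_le_def by (auto simp: env_ren_def the_inv_into_f_f plus_fun_apply intro: subset_mset.order_trans)

lemma inj_on_up: "inj_on f {i. Suc i \<in> S} \<Longrightarrow> inj_on (up f) S"
  unfolding inj_on_def by (auto simp: up_def split: nat.split)

lemma typed_ren:
  "typed G t \<tau> n \<Longrightarrow> inj_on f (fv t) \<Longrightarrow> \<forall>i\<in>fv t. G i \<subseteq># G' (f i) \<Longrightarrow> typed G' (ren f t) \<tau> n"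
  "mtyped G t M n \<Longrightarrow> inj_on f (fv t) \<Longrightarrow> \<forall>i\<in>fv t. G i \<subseteq># G' (f i) \<Longrightarrow> mtyped G' (ren f t) M n"
proof (induction arbitrary: f G' and f G' rule: typed_mtyped.inducts)
  case (tVar \<tau> G i)
  then show ?case by (auto intro: typed_mtyped.tVar mset_subset_eqD)
next
  case (tLam M G t \<tau> n)
  have "inj_on (up f) (fv t)" using tLam.prems(1) by (auto intro: inj_on_up)
  moreover have "\<forall>i\<in>fv t. case_nat M G i \<subseteq># case_nat M G' (up f i)"
    using tLam.prems(2) by (auto split: nat.split)
  ultimately show ?case using tLam.IH by (auto intro: typed_mtyped.tLam)
next
  case (tApp G1 t M \<tau> n G2 u m G)
  let ?S = "fv (App t u)"
  have "inj_on f (fv t)" "inj_on f (fv u)" using tApp.prems(1) by (auto intro: inj_on_subset)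
  then have "typed (env_ren f ?S G1) (ren f t) (Arr M \<tau>) n" "mtyped (env_ren f ?S G2) (ren f u) M m"
    using tApp.IH tApp.prems(1) by (auto simp: env_ren_apply)
  moreover have "env_ren f ?S G1 + env_ren f ?S G2 \<preceq> G'"
    using env_ren_le[OF tApp.prems(1) tApp.hyps(4)] tApp.prems(2) by blast
  ultimately show ?case using typed_mtyped.tApp tApp.hyps(2) by auto
next
  case (tSub M G1 t \<tau> n G2 u m G)
  let ?S = "fv (Sub t u)"
  have "inj_on (up f) (fv t)" "inj_on f (fv u)"
    using tSub.prems(1) by (auto intro: inj_on_subset inj_on_up)
  moreover have "\<forall>i\<in>fv t. case_nat M G1 i \<subseteq># case_nat M (env_ren f ?S G1) (up f i)"
    using tSub.prems(1) by (auto split: nat.split simp: env_ren_apply)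
  ultimately have "typed (case_nat M (env_ren f ?S G1)) (ren (up f) t) \<tau> n"
    "mtyped (env_ren f ?S G2) (ren f u) M m"
    using tSub.IH(1)[of "up f" "case_nat M (env_ren f ?S G1)"] tSub.IH(2)[of f] tSub.prems(1)
    by (auto simp: env_ren_apply)
  moreover have "env_ren f ?S G1 + env_ren f ?S G2 \<preceq> G'"
    using env_ren_le[OF tSub.prems(1) tSub.hyps(4)] tSub.prems(2) by blast
  ultimately show ?case using typed_mtyped.tSub tSub.hyps(2) by auto
next
  case (mAdd G1 u \<sigma> n G2 M m G)
  let ?S = "fv u"
  have "typed (env_ren f ?S G1) (ren f u) \<sigma> n" "mtyped (env_ren f ?S G2) (ren f u) M m"
    using mAdd.IH mAdd.prems(1) by (auto simp: env_ren_apply)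
  moreover have "env_ren f ?S G1 + env_ren f ?S G2 \<preceq> G'"
    using env_ren_le[OF mAdd.prems(1) mAdd.hyps(3)] mAdd.prems(2) by blast
  ultimately show ?case using typed_mtyped.mAdd by auto
qed (auto intro: typed_mtyped.mEmp)

lemma typed_weaken: "typed G t \<tau> n \<Longrightarrow> G \<preceq> G' \<Longrightarrow> typed G' t \<tau> n"
  using typed_ren(1)[of G t \<tau> n "\<lambda>i. i" G'] by (simp add: env_le_def)

lemma mtyped_weaken: "mtyped G t M n \<Longrightarrow> G \<preceq> G' \<Longrightarrow> mtyped G' t M n"
  using typed_ren(2)[of G t M n "\<lambda>i. i" G'] by (simp add: env_le_def)

lemma mtyped_pullback:
  "mtyped G s' M m \<Longrightarrow> \<forall>G \<sigma> n. typed G s' \<sigma> n \<longrightarrow> typed (G \<circ> f) s \<sigma> n \<Longrightarrow> mtyped (G \<circ> f) s M m"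
proof (induction G s' M m rule: typed_mtyped.inducts(2)[where ?P1.0="\<lambda>_ _ _ _. True"])
  case (mAdd G1 u \<sigma> n G2 M m G)
  have "(G1 \<circ> f) + (G2 \<circ> f) \<preceq> G \<circ> f" using \<open>G1 + G2 \<preceq> G\<close> by (auto simp: env_le_def plus_fun_apply)
  then show ?case using typed_mtyped.mAdd mAdd by blast
qed (auto intro: typed_mtyped.mEmp)

lemma typed_ren_pullback: "typed G (ren f t) \<tau> n \<Longrightarrow> typed (G \<circ> f) t \<tau> n"
proof (induction t arbitrary: f G \<tau> n)
  case (Var i)
  then show ?case by (auto elim!: typed_VarE intro: typed_mtyped.tVar)
next
  case (Lam t)
  from Lam.prems obtain M \<tau>' n' where h: "\<tau> = Arr M \<tau>'" "n = Suc n'"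
    "typed (case_nat M G) (ren (up f) t) \<tau>' n'"
    by (auto elim: typed_LamE)
  have "case_nat M G \<circ> up f = case_nat M (G \<circ> f)" by (rule ext) (auto split: nat.split)
  then have "typed (case_nat M (G \<circ> f)) t \<tau>' n'" using Lam.IH[OF h(3)] by simp
  then show ?case unfolding h(1,2) by (rule typed_mtyped.tLam)
next
  case (App t u)
  from App.prems obtain G1 M n1 G2 m where h: "typed G1 (ren f t) (Arr M \<tau>) n1" "M \<noteq> {#}"
    "mtyped G2 (ren f u) M m" "G1 + G2 \<preceq> G" "n = Suc (n1 + m)"
    by (auto elim: typed_AppE)
  have "(G1 \<circ> f) + (G2 \<circ> f) \<preceq> G \<circ> f" using h(4) by (auto simp: env_le_def plus_fun_apply)
  then show ?case using typed_mtyped.tApp[OF App.IH(1)[OF h(1)] h(2) mtyped_pullback[OF h(3)]] h(5) App.IH(2)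
    by blast
next
  case (Sub t u)
  from Sub.prems obtain G1 M n1 G2 m where h: "typed (case_nat M G1) (ren (up f) t) \<tau> n1" "M \<noteq> {#}"
    "mtyped G2 (ren f u) M m" "G1 + G2 \<preceq> G" "n = n1 + m"
    by (auto elim: typed_SubE)
  have "case_nat M G1 \<circ> up f = case_nat M (G1 \<circ> f)" by (rule ext) (auto split: nat.split)
  then have "typed (case_nat M (G1 \<circ> f)) t \<tau> n1" using Sub.IH(1)[OF h(1)] by simp
  moreover have "(G1 \<circ> f) + (G2 \<circ> f) \<preceq> G \<circ> f" using h(4) by (auto simp: env_le_def plus_fun_apply)
  moreover have "mtyped (G2 \<circ> f) u M m" using mtyped_pullback[OF h(3)] Sub.IH(2) by blast
  ultimately show ?case using typed_mtyped.tSub h(2,5) by blast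
qed

lemma inj_on_decr_idx: "k \<notin> S \<Longrightarrow> inj_on (decr_idx k) S"
proof (rule inj_onI)
  fix i j assume "k \<notin> S" "i \<in> S" "j \<in> S" "decr_idx k i = decr_idx k j"
  moreover have "i \<noteq> k" "j \<noteq> k" using calculation by auto
  ultimately show "i = j" by (auto simp: decr_idx_def split: if_splits)
qed

lemma typed_decr0: "0 \<notin> fv t \<Longrightarrow> typed (case_nat M G) t \<tau> n \<Longrightarrow> typed G (decr 0 t) \<tau> n"
  and mtyped_decr0: "0 \<notin> fv t \<Longrightarrow> mtyped (case_nat M G) t N n \<Longrightarrow> mtyped G (decr 0 t) N n"
  unfolding decr_ren
  by (erule typed_ren; auto intro: inj_on_decr_idx simp: decr_idx_def split: nat.split)+

lemma typed_decr1: "1 \<notin> fv t \<Longrightarrow> typed (case_nat A (case_nat B G)) t \<tau> n \<Longrightarrow> typed (case_nat A G) (decr 1 t) \<tau> n"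
  unfolding decr_ren
  by (erule typed_ren) (auto intro: inj_on_decr_idx simp: decr_idx_def split: nat.split)

lemma typed_swap0: "typed (case_nat A (case_nat B G)) t \<tau> n \<Longrightarrow> typed (case_nat B (case_nat A G)) (swap 0 t) \<tau> n"
  unfolding swap_ren
  by (erule typed_ren) (auto simp: swap_idx_def inj_on_def split: nat.split)

lemma mtyped_lift0: "mtyped G u M m \<Longrightarrow> mtyped (case_nat X G) (lift 0 u) M m"
  unfolding lift_ren
  by (erule typed_ren) (auto simp: lift_idx_def inj_on_def split: nat.split)

lemma mtyped_lift0_pullback: "mtyped (case_nat X G) (lift 0 s) M n \<Longrightarrow> mtyped G s M n"
proof -
  have "case_nat X G \<circ> lift_idx 0 = G" by (rule ext) simp
  then show "mtyped (case_nat X G) (lift 0 s) M n \<Longrightarrow> mtyped G s M n"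
    using mtyped_pullback[of _ "lift 0 s" M n "lift_idx 0" s] typed_ren_pullback by (metis lift_ren)
qed

lemma mtyped_single: "typed G u \<sigma> n \<Longrightarrow> mtyped G u {#\<sigma>#} n"
  using mAdd[of G u \<sigma> n 0 "{#}" 0 G] mEmp by simp

lemma mtyped_join: "mtyped Ga u A ma \<Longrightarrow> mtyped Gb u B mb \<Longrightarrow> mtyped (Ga + Gb) u (A + B) (ma + mb)"
proof (induction Ga u A ma rule: typed_mtyped.inducts(2)[where ?P1.0="\<lambda>_ _ _ _. True"])
  case (mEmp G u)
  then show ?case by (simp add: mtyped_weaken[OF _ env_le_addR])
next
  case (mAdd G1 u \<sigma> n G2 M m G)
  have "G1 + (G2 + Gb) \<preceq> G + Gb"
    using env_le_add_mono[OF \<open>G1 + G2 \<preceq> G\<close> env_le_refl] by (simp add: add.assoc)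
  then show ?case using typed_mtyped.mAdd[OF \<open>typed G1 u \<sigma> n\<close>] mAdd by (simp add: add.assoc)
qed auto

lemma mtyped_split:
  "mtyped G u M m \<Longrightarrow> M = A + B \<Longrightarrow>
   \<exists>Ga Gb ma mb. mtyped Ga u A ma \<and> mtyped Gb u B mb \<and> m = ma + mb \<and> Ga + Gb \<preceq> G"
proof (induction G u M m arbitrary: A B rule: typed_mtyped.inducts(2)[where ?P1.0="\<lambda>_ _ _ _. True"])
  case (mEmp G u)
  then show ?case
    by (intro exI[of _ "0::env"] exI[of _ "0::env"] exI[of _ "0::nat"] exI[of _ "0::nat"])
      (auto intro: typed_mtyped.mEmp)
next
  case (mAdd G1 u \<sigma> n G2 M m G)
  have one: "typed G1 u \<sigma> n" and le: "G1 + G2 \<preceq> G" by fact+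
  text \<open>Put the typing of \<sigma> into the part of the decomposition containing \<sigma>.\<close>
  have "\<exists>Ga Gb ma mb. mtyped Ga u (add_mset \<sigma> A) ma \<and> mtyped Gb u B mb \<and> n + m = ma + mb \<and> Ga + Gb \<preceq> G"
    if "M = A + B" for A B
  proof -
    obtain Ga Gb ma mb where h: "mtyped Ga u A ma" "mtyped Gb u B mb" "m = ma + mb" "Ga + Gb \<preceq> G2"
      using mAdd.IH \<open>M = A + B\<close> by blast
    have "(G1 + Ga) + Gb \<preceq> G"
      using env_le_trans[OF env_le_add_mono[OF env_le_refl h(4)] le] by (simp add: add.assoc)
    then show ?thesis using typed_mtyped.mAdd[OF one h(1) env_le_refl] h(2,3) by (metis add.assoc)
  qed
  note split = this
  have "\<sigma> \<in># A \<or> \<sigma> \<in># B" using mAdd.prems by (metis union_iff union_single_eq_member)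
  then show ?case
  proof
    assume "\<sigma> \<in># A"
    then obtain A' where "A = add_mset \<sigma> A'" by (metis multi_member_split)
    moreover have "M = A' + B" using mAdd.prems calculation by simp
    ultimately show ?case using split by blast
  next
    assume "\<sigma> \<in># B"
    then obtain B' where "B = add_mset \<sigma> B'" by (metis multi_member_split)
    moreover have "M = B' + A" using mAdd.prems calculation by (simp add: add.commute)
    ultimately show ?case using split[of B' A] by (metis add.commute)
  qed
qed auto

lemma mtyped_member: "\<sigma> \<in># M \<Longrightarrow> mtyped G u M m \<Longrightarrow> \<exists>G' k. typed G' u \<sigma> k \<and> k \<le> m \<and> G' \<preceq> G"
proof -
  assume "\<sigma> \<in># M" "mtyped G u M m"
  then obtain Ga Gb ma mb where h: "mtyped Ga u {#\<sigma>#} ma" "m = ma + mb" "Ga + Gb \<preceq> G"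
    using mtyped_split[of G u M m "{#\<sigma>#}" "M - {#\<sigma>#}"] by auto
  from h(1) obtain G1 G2 k m2 where "typed G1 u \<sigma> k" "G1 + G2 \<preceq> Ga" "ma = k + m2"
    by (cases rule: mtyped.cases) auto
  then show ?thesis using h(2,3) by (meson env_le_add_trans(1) env_le_trans le_add1 trans_le_add1)
qed

lemma mtyped_submset: "A \<subseteq># M \<Longrightarrow> mtyped G u M m \<Longrightarrow> \<exists>G' m'. mtyped G' u A m' \<and> m' \<le> m \<and> G' \<preceq> G"
  by (metis env_le_add_trans(1) le_add1 mtyped_split subset_mset.le_iff_add)

lemma submset_addD: "A + B \<subseteq># M \<Longrightarrow> A \<subseteq># M" "A + B \<subseteq># M \<Longrightarrow> B \<subseteq># M"
  using mset_subset_eq_add_left mset_subset_eq_add_right subset_mset.order_trans by blast+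

lemma submset_split: "A + B \<subseteq># M \<Longrightarrow> M = A + (M - A) \<and> B \<subseteq># M - A"
  using submset_addD(1)[of A B M] subset_mset.le_diff_conv2[of A M B] by (auto simp: add.commute)

section \<open>Subject reduction\<close>

text \<open>This is how the propagation rules
  distribute the typing of a substituted term among the copies of the substitution.\<close>

lemma typed_Sub_intro:
  assumes "typed D v \<sigma> k" "0 \<in> fv v" "mtyped Gu u M m" "D 0 \<subseteq># M"
  shows "\<exists>G' m'. typed G' (Sub v u) \<sigma> (k + m') \<and> m' \<le> m \<and> G' \<preceq> env_tl D + Gu"
proof -
  obtain G1 m1 where h: "mtyped G1 u (D 0) m1" "m1 \<le> m" "G1 \<preceq> Gu"
    using mtyped_submset[OF assms(4,3)] by blast
  have "typed (case_nat (D 0) (env_tl D)) v \<sigma> k" using assms(1) by simp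
  from tSub[OF this typed_fv[OF assms(1,2)] h(1) env_le_refl] show ?thesis
    using h env_le_add_mono[OF env_le_refl h(3)] by blast
qed

lemma mtyped_Sub_intro:
  "mtyped D v N n \<Longrightarrow> 0 \<in> fv v \<Longrightarrow> mtyped Gu u M m \<Longrightarrow> D 0 \<subseteq># M \<Longrightarrow>
   \<exists>G' m'. mtyped G' (Sub v u) N (n + m') \<and> m' \<le> m \<and> G' \<preceq> env_tl D + Gu"
proof (induction D v N n arbitrary: Gu M m rule: typed_mtyped.inducts(2)[where ?P1.0="\<lambda>_ _ _ _. True"])
  case (mEmp G u)
  then show ?case by (auto intro!: exI[of _ 0] typed_mtyped.mEmp)
next
  case (mAdd G1 v \<sigma> k G2 N n G)
  have "G1 0 + G2 0 \<subseteq># M" using mAdd.prems(3) \<open>G1 + G2 \<preceq> G\<close>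
    unfolding env_le_def plus_fun_apply by (metis subset_mset.order_trans)
  then have M: "M = G1 0 + (M - G1 0)" "G2 0 \<subseteq># M - G1 0" using submset_split by blast+
  obtain Ga Gb ma mb where sp: "mtyped Ga u (G1 0) ma" "mtyped Gb u (M - G1 0) mb" "m = ma + mb" "Ga + Gb \<preceq> Gu"
    using mtyped_split[OF mAdd.prems(2) M(1)] by blast
  obtain H1 m1 where h1: "typed H1 (Sub v u) \<sigma> (k + m1)" "m1 \<le> ma" "H1 \<preceq> env_tl G1 + Ga"
    using typed_Sub_intro[OF \<open>typed G1 v \<sigma> k\<close> mAdd.prems(1) sp(1)] by blast
  obtain H2 m2 where h2: "mtyped H2 (Sub v u) N (n + m2)" "m2 \<le> mb" "H2 \<preceq> env_tl G2 + Gb"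
    using mAdd.IH[OF mAdd.prems(1) sp(2) M(2)] by blast
  have "H1 + H2 \<preceq> (env_tl G1 + env_tl G2) + (Ga + Gb)"
    using env_le_add_mono[OF h1(3) h2(3)] by (simp add: add_ac)
  also have "\<dots> \<preceq> env_tl G + Gu"
    using env_le_add_mono[OF env_le_tl[OF \<open>G1 + G2 \<preceq> G\<close>] sp(4)] by simp
  finally have "H1 + H2 \<preceq> env_tl G + Gu" .
  moreover have "mtyped (H1 + H2) (Sub v u) (add_mset \<sigma> N) ((k + m1) + (n + m2))"
    by (rule typed_mtyped.mAdd[OF h1(1) h2(1) env_le_refl])
  ultimately show ?case using h1(2) h2(2) sp(3)
    by (intro exI[of _ "H1 + H2"] exI[of _ "m1 + m2"]) (auto simp: algebra_simps)
qed auto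

lemma typed_Sub_AppE:
  assumes "typed G (Sub (App t v) u) \<tau> n"
  obtains G1 G2 D1 D2 M N n1 n2 m where
    "typed D1 t (Arr N \<tau>) n1" "N \<noteq> {#}" "mtyped D2 v N n2"
    "D1 0 + D2 0 \<subseteq># M" "env_tl D1 + env_tl D2 \<preceq> G1"
    "M \<noteq> {#}" "mtyped G2 u M m" "G1 + G2 \<preceq> G" "n = Suc (n1 + n2) + m"
  using assms
  by (elim typed_SubE typed_AppE) (auto simp: env_le_case_nat_iff plus_fun_apply)

lemma typed_Sub_SubE:
  assumes "typed G (Sub (Sub t u) v) \<tau> n"
  obtains G1 G2 D1 D2 Mu Mv nt mu mv where
    "typed (case_nat Mu D1) t \<tau> nt" "Mu \<noteq> {#}" "mtyped D2 u Mu mu"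
    "D1 0 + D2 0 \<subseteq># Mv" "env_tl D1 + env_tl D2 \<preceq> G1"
    "Mv \<noteq> {#}" "mtyped G2 v Mv mv" "G1 + G2 \<preceq> G" "n = nt + mu + mv"
  using assms
  by (elim typed_SubE) (auto simp: env_le_case_nat_iff plus_fun_apply)

lemma typed_B: "typed G (App (Lam t) u) \<tau> n \<Longrightarrow> \<exists>n'<n. typed G (Sub t u) \<tau> n'"
proof -
  assume "typed G (App (Lam t) u) \<tau> n"
  then obtain G1 G2 M k m where h: "typed (case_nat M G1) t \<tau> k" "M \<noteq> {#}" "mtyped G2 u M m"
    "G1 + G2 \<preceq> G" "n = Suc (Suc k + m)"
    by (elim typed_AppE typed_LamE) auto
  have "typed G (Sub t u) \<tau> (k + m)" using h(1-4) by (rule tSub)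
  moreover have "k + m < n" using h(5) by simp
  ultimately show ?thesis by blast
qed

lemma typed_d': "typed G (Sub (Var 0) u) \<tau> n \<Longrightarrow> \<exists>n'<n. typed G u \<tau> n'"
proof -
  assume "typed G (Sub (Var 0) u) \<tau> n"
  then obtain G1 G2 M m where h: "\<tau> \<in># M" "mtyped G2 u M m" "G1 + G2 \<preceq> G" "n = Suc m"
    by (elim typed_SubE typed_VarE) auto
  then obtain G' k where k: "typed G' u \<tau> k" "k \<le> m" "G' \<preceq> G2"
    using mtyped_member by blast
  have "typed G u \<tau> k" using typed_weaken[OF k(1)] env_le_trans[OF k(3) env_le_add_trans(2)[OF h(3)]] .
  moreover have "k < n" using h(4) k(2) by simp
  ultimately show ?thesis by blast
qed

lemma typed_w: "0 \<notin> fv t \<Longrightarrow> typed G (Sub t u) \<tau> n \<Longrightarrow> \<exists>n'<n. typed G (decr 0 t) \<tau> n'"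
proof -
  assume "0 \<notin> fv t" "typed G (Sub t u) \<tau> n"
  then obtain G1 G2 M k m where h: "typed (case_nat M G1) t \<tau> k" "M \<noteq> {#}" "mtyped G2 u M m"
    "G1 + G2 \<preceq> G" "n = k + m"
    by (elim typed_SubE) auto
  have "typed G (decr 0 t) \<tau> k"
    using typed_weaken[OF typed_decr0[OF \<open>0 \<notin> fv t\<close> h(1)] env_le_add_trans(1)[OF h(4)]] .
  moreover have "k < n" using h(5) mtyped_pos[OF h(3,2)] by simp
  ultimately show ?thesis by blast
qed

lemma consume_rule_typed: "consume_rule s s' \<Longrightarrow> typed G s \<tau> n \<Longrightarrow> \<exists>n'<n. typed G s' \<tau> n'"
proof (induction rule: consume_rule.induct)
  case (B t u)
  then show ?case by (rule typed_B)
next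
  case (d' u)
  then show ?case by (rule typed_d')
next
  case (w t u)
  then show ?case by (rule typed_w)
qed

lemma typed_app_r:
  assumes "0 \<notin> fv t" "0 \<in> fv v" "typed G (Sub (App t v) u) \<tau> n"
  shows "\<exists>n'\<le>n. typed G (App (decr 0 t) (Sub v u)) \<tau> n'"
proof -
  from assms(3) obtain G1 G2 D1 D2 M N n1 n2 m where h:
    "typed D1 t (Arr N \<tau>) n1" "N \<noteq> {#}" "mtyped D2 v N n2"
    "D1 0 + D2 0 \<subseteq># M" "env_tl D1 + env_tl D2 \<preceq> G1"
    "M \<noteq> {#}" "mtyped G2 u M m" "G1 + G2 \<preceq> G" "n = Suc (n1 + n2) + m"
    by (rule typed_Sub_AppE)
  have t': "typed (env_tl D1) (decr 0 t) (Arr N \<tau>) n1"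
    using typed_decr0[OF assms(1)] h(1) by (metis case_nat_env_tl)
  obtain H m' where v': "mtyped H (Sub v u) N (n2 + m')" "m' \<le> m" "H \<preceq> env_tl D2 + G2"
    using mtyped_Sub_intro[OF h(3) assms(2) h(7) submset_addD(2)[OF h(4)]] by blast
  have "env_tl D1 + H \<preceq> (env_tl D1 + env_tl D2) + G2"
    using env_le_add_mono[OF env_le_refl[of "env_tl D1"] v'(3)] by (simp add: add.assoc)
  also have "\<dots> \<preceq> G" using env_le_trans[OF env_le_add_mono[OF h(5) env_le_refl[of G2]] h(8)] .
  finally have "typed G (App (decr 0 t) (Sub v u)) \<tau> (Suc (n1 + (n2 + m')))"
    using tApp[OF t' h(2) v'(1)] by blast
  moreover have "Suc (n1 + (n2 + m')) \<le> n" using h(9) v'(2) by simp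
  ultimately show ?thesis by blast
qed

lemma typed_app_l:
  assumes "0 \<in> fv t" "0 \<notin> fv v" "typed G (Sub (App t v) u) \<tau> n"
  shows "\<exists>n'\<le>n. typed G (App (Sub t u) (decr 0 v)) \<tau> n'"
proof -
  from assms(3) obtain G1 G2 D1 D2 M N n1 n2 m where h:
    "typed D1 t (Arr N \<tau>) n1" "N \<noteq> {#}" "mtyped D2 v N n2"
    "D1 0 + D2 0 \<subseteq># M" "env_tl D1 + env_tl D2 \<preceq> G1"
    "M \<noteq> {#}" "mtyped G2 u M m" "G1 + G2 \<preceq> G" "n = Suc (n1 + n2) + m"
    by (rule typed_Sub_AppE)
  have v': "mtyped (env_tl D2) (decr 0 v) N n2"
    using mtyped_decr0[OF assms(2)] h(3) by (metis case_nat_env_tl)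
  obtain H m' where t': "typed H (Sub t u) (Arr N \<tau>) (n1 + m')" "m' \<le> m" "H \<preceq> env_tl D1 + G2"
    using typed_Sub_intro[OF h(1) assms(1) h(7) submset_addD(1)[OF h(4)]] by blast
  have "H + env_tl D2 \<preceq> (env_tl D1 + env_tl D2) + G2"
    using env_le_add_mono[OF t'(3) env_le_refl[of "env_tl D2"]] by (simp add: add_ac)
  also have "\<dots> \<preceq> G" using env_le_trans[OF env_le_add_mono[OF h(5) env_le_refl[of G2]] h(8)] .
  finally have "typed G (App (Sub t u) (decr 0 v)) \<tau> (Suc (n1 + m' + n2))"
    using tApp[OF t'(1) h(2) v'] by blast
  moreover have "Suc (n1 + m' + n2) \<le> n" using h(9) t'(2) by simp
  ultimately show ?thesis by blast
qed

lemma typed_app: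
  assumes "0 \<in> fv t" "0 \<in> fv v" "typed G (Sub (App t v) u) \<tau> n"
  shows "\<exists>n'\<le>n. typed G (App (Sub t u) (Sub v u)) \<tau> n'"
proof -
  from assms(3) obtain G1 G2 D1 D2 M N n1 n2 m where h:
    "typed D1 t (Arr N \<tau>) n1" "N \<noteq> {#}" "mtyped D2 v N n2"
    "D1 0 + D2 0 \<subseteq># M" "env_tl D1 + env_tl D2 \<preceq> G1"
    "M \<noteq> {#}" "mtyped G2 u M m" "G1 + G2 \<preceq> G" "n = Suc (n1 + n2) + m"
    by (rule typed_Sub_AppE)
  text \<open>Split the typing of u between the two copies of the substitution.\<close>
  note M = submset_split[OF h(4)]
  obtain Ga Gb ma mb where sp: "mtyped Ga u (D1 0) ma" "mtyped Gb u (M - D1 0) mb"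
    "m = ma + mb" "Ga + Gb \<preceq> G2"
    using mtyped_split[OF h(7) conjunct1[OF M]] by blast
  obtain H1 m1 where t': "typed H1 (Sub t u) (Arr N \<tau>) (n1 + m1)" "m1 \<le> ma" "H1 \<preceq> env_tl D1 + Ga"
    using typed_Sub_intro[OF h(1) assms(1) sp(1) subset_mset.order_refl] by blast
  obtain H2 m2 where v': "mtyped H2 (Sub v u) N (n2 + m2)" "m2 \<le> mb" "H2 \<preceq> env_tl D2 + Gb"
    using mtyped_Sub_intro[OF h(3) assms(2) sp(2) conjunct2[OF M]] by blast
  have "H1 + H2 \<preceq> (env_tl D1 + env_tl D2) + (Ga + Gb)"
    using env_le_add_mono[OF t'(3) v'(3)] by (simp add: add_ac)
  also have "\<dots> \<preceq> G" using env_le_trans[OF env_le_add_mono[OF h(5) sp(4)] h(8)] .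
  finally have "typed G (App (Sub t u) (Sub v u)) \<tau> (Suc (n1 + m1 + (n2 + m2)))"
    using tApp[OF t'(1) h(2) v'(1)] by blast
  moreover have "Suc (n1 + m1 + (n2 + m2)) \<le> n" using h(9) t'(2) v'(2) sp(3) by simp
  ultimately show ?thesis by blast
qed

lemma typed_lam:
  assumes "typed G (Sub (Lam t) u) \<tau> n"
  shows "\<exists>n'\<le>n. typed G (Lam (Sub (swap 0 t) (lift 0 u))) \<tau> n'"
proof -
  from assms obtain K \<tau>' M G1 G2 k m where h: "typed (case_nat K (case_nat M G1)) t \<tau>' k"
    "M \<noteq> {#}" "mtyped G2 u M m" "G1 + G2 \<preceq> G" "\<tau> = Arr K \<tau>'" "n = Suc k + m"
    by (elim typed_SubE typed_LamE) auto
  have "case_nat K G1 + case_nat {#} G2 \<preceq> case_nat K G"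
    using h(4) by (simp add: case_nat_add case_nat_mono)
  from tSub[OF typed_swap0[OF h(1)] h(2) mtyped_lift0[OF h(3)] this]
  have "typed G (Lam (Sub (swap 0 t) (lift 0 u))) \<tau> (Suc (k + m))"
    unfolding h(5) by (rule tLam)
  then show ?thesis using h(6) by auto
qed

lemma typed_comp1:
  assumes "1 \<notin> fv t" "0 \<in> fv u" "typed G (Sub (Sub t u) v) \<tau> n"
  shows "\<exists>n'\<le>n. typed G (Sub (decr 1 t) (Sub u v)) \<tau> n'"
proof -
  from assms(3) obtain G1 G2 D1 D2 Mu Mv nt mu mv where h:
    "typed (case_nat Mu D1) t \<tau> nt" "Mu \<noteq> {#}" "mtyped D2 u Mu mu"
    "D1 0 + D2 0 \<subseteq># Mv" "env_tl D1 + env_tl D2 \<preceq> G1"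
    "Mv \<noteq> {#}" "mtyped G2 v Mv mv" "G1 + G2 \<preceq> G" "n = nt + mu + mv"
    by (rule typed_Sub_SubE)
  have t': "typed (case_nat Mu (env_tl D1)) (decr 1 t) \<tau> nt"
    using typed_decr1[OF assms(1)] h(1) by (metis case_nat_env_tl)
  obtain H m' where u': "mtyped H (Sub u v) Mu (mu + m')" "m' \<le> mv" "H \<preceq> env_tl D2 + G2"
    using mtyped_Sub_intro[OF h(3) assms(2) h(7) submset_addD(2)[OF h(4)]] by blast
  have "env_tl D1 + H \<preceq> (env_tl D1 + env_tl D2) + G2"
    using env_le_add_mono[OF env_le_refl[of "env_tl D1"] u'(3)] by (simp add: add.assoc)
  also have "\<dots> \<preceq> G" using env_le_trans[OF env_le_add_mono[OF h(5) env_le_refl[of G2]] h(8)] .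
  finally have "typed G (Sub (decr 1 t) (Sub u v)) \<tau> (nt + (mu + m'))"
    using tSub[OF t' h(2) u'(1)] by blast
  moreover have "nt + (mu + m') \<le> n" using h(9) u'(2) by simp
  ultimately show ?thesis by blast
qed

lemma typed_comp2:
  assumes "1 \<in> fv t" "0 \<in> fv u" "typed G (Sub (Sub t u) v) \<tau> n"
  shows "\<exists>n'\<le>n. typed G (Sub (Sub (swap 0 t) (lift 0 v)) (Sub u v)) \<tau> n'"
proof -
  from assms(3) obtain G1 G2 D1 D2 Mu Mv nt mu mv where h:
    "typed (case_nat Mu D1) t \<tau> nt" "Mu \<noteq> {#}" "mtyped D2 u Mu mu"
    "D1 0 + D2 0 \<subseteq># Mv" "env_tl D1 + env_tl D2 \<preceq> G1"
    "Mv \<noteq> {#}" "mtyped G2 v Mv mv" "G1 + G2 \<preceq> G" "n = nt + mu + mv"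
    by (rule typed_Sub_SubE)
  text \<open>Split the typing of v between the copy staying with t and the one going into u.\<close>
  note Mv = submset_split[OF h(4)]
  obtain Ga Gb ma mb where sp: "mtyped Ga v (D1 0) ma" "mtyped Gb v (Mv - D1 0) mb"
    "mv = ma + mb" "Ga + Gb \<preceq> G2"
    using mtyped_split[OF h(7) conjunct1[OF Mv]] by blast
  have "D1 0 \<noteq> {#}" using typed_fv[OF h(1) assms(1)] by simp
  moreover have "typed (case_nat (D1 0) (case_nat Mu (env_tl D1))) (swap 0 t) \<tau> nt"
    using typed_swap0[of Mu "D1 0" "env_tl D1"] h(1) by simp
  moreover have "case_nat Mu (env_tl D1) + case_nat {#} Ga \<preceq> case_nat Mu (env_tl D1 + Ga)"
    by (simp add: case_nat_add)
  ultimately have inner: "typed (case_nat Mu (env_tl D1 + Ga)) (Sub (swap 0 t) (lift 0 v)) \<tau> (nt + ma)"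
    using tSub mtyped_lift0[OF sp(1)] by blast
  obtain H m' where u': "mtyped H (Sub u v) Mu (mu + m')" "m' \<le> mb" "H \<preceq> env_tl D2 + Gb"
    using mtyped_Sub_intro[OF h(3) assms(2) sp(2) conjunct2[OF Mv]] by blast
  have "(env_tl D1 + Ga) + H \<preceq> (env_tl D1 + env_tl D2) + (Ga + Gb)"
    using env_le_add_mono[OF env_le_refl[of "env_tl D1 + Ga"] u'(3)] by (simp add: add_ac)
  also have "\<dots> \<preceq> G" using env_le_trans[OF env_le_add_mono[OF h(5) sp(4)] h(8)] .
  finally have "typed G (Sub (Sub (swap 0 t) (lift 0 v)) (Sub u v)) \<tau> (nt + ma + (mu + m'))"
    using tSub[OF inner h(2) u'(1)] by blast
  moreover have "nt + ma + (mu + m') \<le> n" using h(9) u'(2) sp(3) by simp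
  ultimately show ?thesis by blast
qed

lemma prop_rule_typed: "prop_rule s s' \<Longrightarrow> typed G s \<tau> n \<Longrightarrow> \<exists>n'\<le>n. typed G s' \<tau> n'"
proof (induction rule: prop_rule.induct)
  case (app_r t v u)
  then show ?case by (rule typed_app_r)
next
  case (app_l t v u)
  then show ?case by (rule typed_app_l)
next
  case (app t v u)
  then show ?case by (rule typed_app)
next
  case (lam t u)
  then show ?case by (rule typed_lam)
next
  case (comp1 t u v)
  then show ?case by (rule typed_comp1)
next
  case (comp2 t u v)
  then show ?case by (rule typed_comp2)
qed

lemma cs_rule_typed: "cs_rule s s' \<Longrightarrow> typed G s \<tau> n \<Longrightarrow> \<exists>n'\<le>n. typed G s' \<tau> n'"
proof (induction rule: cs_rule.induct)
  case (1 u t v)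
  from 1(2) obtain G1 G2 D1 D2 Mu Mv nt mu mv where h:
    "typed (case_nat Mu D1) t \<tau> nt" "Mu \<noteq> {#}" "mtyped D2 u Mu mu"
    "D1 0 + D2 0 \<subseteq># Mv" "env_tl D1 + env_tl D2 \<preceq> G1"
    "Mv \<noteq> {#}" "mtyped G2 v Mv mv" "G1 + G2 \<preceq> G" "n = nt + mu + mv"
    by (rule typed_Sub_SubE)
  have "case_nat Mu D1 \<preceq> case_nat Mu (case_nat Mv (env_tl D1))"
    using case_nat_mono[OF subset_mset.order_refl case_nat_mono[OF submset_addD(1)[OF h(4)] env_le_refl[of "env_tl D1"]]]
    by simp
  then have "typed (case_nat Mu (case_nat Mv (env_tl D1))) t \<tau> nt"
    by (rule typed_weaken[OF h(1)])
  then have "typed (case_nat Mv (case_nat Mu (env_tl D1))) (swap 0 t) \<tau> nt" by (rule typed_swap0)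
  moreover have "case_nat Mu (env_tl D1) + case_nat {#} G2 \<preceq> case_nat Mu (env_tl D1 + G2)"
    by (simp add: case_nat_add)
  ultimately have inner: "typed (case_nat Mu (env_tl D1 + G2)) (Sub (swap 0 t) (lift 0 v)) \<tau> (nt + mv)"
    using tSub h(6) mtyped_lift0[OF h(7)] by blast
  have u': "mtyped (env_tl D2) (decr 0 u) Mu mu"
    using mtyped_decr0[OF 1(1)] h(3) by (metis case_nat_env_tl)
  have "(env_tl D1 + G2) + env_tl D2 \<preceq> (env_tl D1 + env_tl D2) + G2"
    by (simp add: add_ac)
  also have "\<dots> \<preceq> G" using env_le_trans[OF env_le_add_mono[OF h(5) env_le_refl[of G2]] h(8)] .
  finally have "typed G (Sub (Sub (swap 0 t) (lift 0 v)) (decr 0 u)) \<tau> (nt + mv + mu)"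
    using tSub[OF inner h(2) u'] by blast
  moreover have "nt + mv + mu \<le> n" using h(9) by simp
  ultimately show ?case by blast
qed

lemma mtyped_step:
  assumes add: "\<And>a b c d. P a b \<Longrightarrow> P c d \<Longrightarrow> P (a + c) (b + d)"
  shows "mtyped G u M m \<Longrightarrow> M \<noteq> {#} \<Longrightarrow> \<forall>G \<sigma> k. typed G u \<sigma> k \<longrightarrow> (\<exists>k'. P k' k \<and> typed G u' \<sigma> k') \<Longrightarrow>
    \<exists>m'. P m' m \<and> mtyped G u' M m'"
proof (induction G u M m rule: typed_mtyped.inducts(2)[where ?P1.0="\<lambda>_ _ _ _. True"])
  case (mAdd G1 u \<sigma> n G2 M m G)
  obtain k' where k': "P k' n" "typed G1 u' \<sigma> k'" using mAdd.prems(2) \<open>typed G1 u \<sigma> n\<close> by blast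
  show ?case
  proof (cases "M = {#}")
    case True
    then have "m = 0" using \<open>mtyped G2 u M m\<close> by (auto elim: mtyped_emptyE)
    then show ?thesis using typed_mtyped.mAdd[OF k'(2) mEmp \<open>G1 + G2 \<preceq> G\<close>] k'(1) True by auto
  next
    case False
    then obtain m' where "P m' m" "mtyped G2 u' M m'" using mAdd.IH mAdd.prems(2) by blast
    then show ?thesis using typed_mtyped.mAdd[OF k'(2) _ \<open>G1 + G2 \<preceq> G\<close>] add[OF k'(1)] by blast
  qed
qed auto

lemma ctx_typed_step:
  assumes step: "\<And>s s' G \<tau> n. R s s' \<Longrightarrow> typed G s \<tau> n \<Longrightarrow> \<exists>n'. P n' n \<and> typed G s' \<tau> n'"
    and shift: "\<And>a b c. P a b \<Longrightarrow> P (c + a) (c + b)"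
    and add: "\<And>a b c d. P a b \<Longrightarrow> P c d \<Longrightarrow> P (a + c) (b + d)"
  shows "ctx R s s' \<Longrightarrow> typed G s \<tau> n \<Longrightarrow> \<exists>n'. P n' n \<and> typed G s' \<tau> n'"
proof (induction arbitrary: G \<tau> n rule: ctx.induct)
  have shiftR: "P a b \<Longrightarrow> P (a + c) (b + c)" for a b c using shift by (metis add.commute)
  have Suc: "P a b \<Longrightarrow> P (Suc a) (Suc b)" for a b using shift[of a b 1] by simp
  {
    case (root t t')
    then show ?case using step by blast
  next
    case (lam t t')
    from lam.prems obtain M \<tau>' k where h: "\<tau> = Arr M \<tau>'" "n = Suc k" "typed (case_nat M G) t \<tau>' k"
      by (auto elim: typed_LamE)
    then obtain k' where "P k' k" "typed (case_nat M G) t' \<tau>' k'" using lam.IH by blast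
    then show ?case using h tLam Suc by blast
  next
    case (appl t t' u)
    from appl.prems obtain G1 M k G2 m where h: "typed G1 t (Arr M \<tau>) k" "M \<noteq> {#}"
      "mtyped G2 u M m" "G1 + G2 \<preceq> G" "n = Suc (k + m)"
      by (auto elim: typed_AppE)
    then obtain k' where "P k' k" "typed G1 t' (Arr M \<tau>) k'" using appl.IH by blast
    then show ?case using h tApp Suc shiftR by blast
  next
    case (appr u u' t)
    from appr.prems obtain G1 M k G2 m where h: "typed G1 t (Arr M \<tau>) k" "M \<noteq> {#}"
      "mtyped G2 u M m" "G1 + G2 \<preceq> G" "n = Suc (k + m)"
      by (auto elim: typed_AppE)
    then obtain m' where "P m' m" "mtyped G2 u' M m'" using mtyped_step[of P, OF add h(3,2)] appr.IH by blast
    then show ?case using h tApp Suc shift by blast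
  next
    case (subl t t' u)
    from subl.prems obtain G1 M k G2 m where h: "typed (case_nat M G1) t \<tau> k" "M \<noteq> {#}"
      "mtyped G2 u M m" "G1 + G2 \<preceq> G" "n = k + m"
      by (auto elim: typed_SubE)
    then obtain k' where "P k' k" "typed (case_nat M G1) t' \<tau> k'" using subl.IH by blast
    then show ?case using h tSub shiftR by blast
  next
    case (subr u u' t)
    from subr.prems obtain G1 M k G2 m where h: "typed (case_nat M G1) t \<tau> k" "M \<noteq> {#}"
      "mtyped G2 u M m" "G1 + G2 \<preceq> G" "n = k + m"
      by (auto elim: typed_SubE)
    then obtain m' where "P m' m" "mtyped G2 u' M m'" using mtyped_step[of P, OF add h(3,2)] subr.IH by blast
    then show ?case using h tSub shift by blast
  }
qed

lemma ctx_consume_rule_typed: "ctx consume_rule s s' \<Longrightarrow> typed G s \<tau> n \<Longrightarrow> \<exists>n'<n. typed G s' \<tau> n'"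
  using ctx_typed_step[where P = "(<)", OF consume_rule_typed] by simp

lemma ctx_prop_rule_typed: "ctx prop_rule s s' \<Longrightarrow> typed G s \<tau> n \<Longrightarrow> \<exists>n'\<le>n. typed G s' \<tau> n'"
  using ctx_typed_step[where P = "(\<le>)", OF prop_rule_typed] by simp

lemma cs_eq_typed: "cs_eq s s' \<Longrightarrow> typed G s \<tau> n \<Longrightarrow> \<exists>n'\<le>n. typed G s' \<tau> n'"
proof -
  have cs_step: "ctx cs_rule s s' \<Longrightarrow> typed G s \<tau> n \<Longrightarrow> \<exists>n'\<le>n. typed G s' \<tau> n'" for s s' n
    using ctx_typed_step[where P = "(\<le>)", OF cs_rule_typed] by simp
  assume "cs_eq s s'" "typed G s \<tau> n"
  from cs_eq_rtranclp[OF this(1)] this(2) show ?thesis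
  proof (induction arbitrary: n rule: rtranclp_induct)
    case (step y z)
    then show ?case using cs_step by (meson order_trans)
  qed auto
qed

section \<open>Typable terms are strongly normalising\<close>

lemma es_red_decreases:
  assumes "es_red t t'" "typed G t \<tau> n"
  shows "\<exists>n'. typed G t' \<tau> n' \<and> ((n', weight t'), (n, weight t)) \<in> less_than <*lex*> less_than"
proof -
  obtain s s' where h: "cs_eq t s" "ctx es_rule s s'" "cs_eq s' t'" using assms(1) es_red_def by blast
  obtain n1 where n1: "n1 \<le> n" "typed G s \<tau> n1" using cs_eq_typed[OF h(1) assms(2)] by blast
  have "\<exists>n2. typed G s' \<tau> n2 \<and> (n2 < n1 \<or> n2 \<le> n1 \<and> weight s' < weight s)"
    using ctx_es_rule_split[OF h(2)] ctx_consume_rule_typed[OF _ n1(2)] ctx_prop_rule_typed[OF _ n1(2)]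
      ctx_prop_rule_weight by blast
  then obtain n2 where n2: "typed G s' \<tau> n2" "n2 < n1 \<or> n2 \<le> n1 \<and> weight s' < weight s" by blast
  obtain n3 where n3: "n3 \<le> n2" "typed G t' \<tau> n3" using cs_eq_typed[OF h(3) n2(1)] by blast
  have "weight s = weight t" "weight t' = weight s'" using cs_eq_weight h(1,3) by auto
  then show ?thesis using n1 n2 n3 by (intro exI[of _ n3]) auto
qed

lemma typed_SN:
  assumes "typed G t \<tau> n"
  shows "SN es_red t"
proof -
  have "\<forall>t n. p = (n, weight t) \<longrightarrow> typed G t \<tau> n \<longrightarrow> Wellfounded.accp (conversep es_red) t" for p
  proof (induction p rule: wf_induct[OF wf_lex_prod[OF wf_less_than wf_less_than]])
    case (1 p)
    show ?case
    proof (intro allI impI)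
      fix t n assume p: "p = (n, weight t)" and t: "typed G t \<tau> n"
      show "Wellfounded.accp (conversep es_red) t"
      proof (rule accp.intros)
        fix t' assume "conversep es_red t' t"
        then have "es_red t t'" by simp
        then obtain n' where "typed G t' \<tau> n'" "((n', weight t'), p) \<in> less_than <*lex*> less_than"
          using es_red_decreases[OF _ t] p by blast
        then show "Wellfounded.accp (conversep es_red) t'" using 1 by blast
      qed
    qed
  qed
  then show ?thesis using assms unfolding SN_def by blast
qed

section \<open>Beta-strongly normalising lambda-terms are typable\<close>

definition env_ins :: "nat \<Rightarrow> ty multiset \<Rightarrow> env \<Rightarrow> env" where
  "env_ins k M G = (\<lambda>i. if i < k then G i else if i = k then M else G (i - 1))"

lemma env_ins_0: "env_ins 0 M G = case_nat M G"
  by (rule ext) (auto simp: env_ins_def split: nat.split)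

lemma env_ins_Suc: "env_ins (Suc k) M G = case_nat (G 0) (env_ins k M (env_tl G))"
  by (rule ext) (auto simp: env_ins_def env_tl_def split: nat.split)

lemma env_ins_add: "env_ins k A G + env_ins k B H = env_ins k (A + B) (G + H)"
  by (rule ext) (auto simp: env_ins_def plus_fun_apply)

lemma anti_subst_Var:
  assumes "typed G (subst (Var i) k s) \<tau> n"
  shows "\<exists>M Gt Gs nt ms. typed (env_ins k M Gt) (Var i) \<tau> nt \<and> mtyped Gs s M ms \<and> Gt + Gs \<preceq> G"
proof (cases "i = k")
  case True
  then have "typed (env_ins k {#\<tau>#} 0) (Var i) \<tau> (Suc 0)" by (auto simp: env_ins_def intro: tVar)
  moreover have "mtyped G s {#\<tau>#} n" using assms True by (simp add: mtyped_single)
  ultimately show ?thesis by (metis add_0 env_le_refl)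
next
  case False
  then have "\<tau> \<in># env_ins k {#} G i" using assms
    by (auto simp: env_ins_def split: if_splits elim: typed_VarE)
  then have "typed (env_ins k {#} G) (Var i) \<tau> (Suc 0)" by (rule tVar)
  then show ?thesis using mEmp by (metis add.right_neutral env_le_refl)
qed

lemma mtyped_anti_subst:
  "mtyped G x N n \<Longrightarrow>
   \<forall>G \<sigma> n. typed G x \<sigma> n \<longrightarrow> (\<exists>M Gu Gs nu ms. typed (env_ins k M Gu) u \<sigma> nu \<and> mtyped Gs s M ms \<and> Gu + Gs \<preceq> G) \<Longrightarrow>
   \<exists>M Gu Gs nu ms. mtyped (env_ins k M Gu) u N nu \<and> mtyped Gs s M ms \<and> Gu + Gs \<preceq> G"
proof (induction G x N n rule: typed_mtyped.inducts(2)[where ?P1.0="\<lambda>_ _ _ _. True"])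
  case (mEmp G x)
  then show ?case by (metis add_0 mEmp typed_mtyped.mEmp zero_env_le)
next
  case (mAdd G1 x \<sigma> n G2 N m G)
  obtain M1 Gu1 Gs1 nu1 ms1 where a: "typed (env_ins k M1 Gu1) u \<sigma> nu1" "mtyped Gs1 s M1 ms1" "Gu1 + Gs1 \<preceq> G1"
    using mAdd.prems \<open>typed G1 x \<sigma> n\<close> by blast
  obtain M2 Gu2 Gs2 nu2 ms2 where b: "mtyped (env_ins k M2 Gu2) u N nu2" "mtyped Gs2 s M2 ms2" "Gu2 + Gs2 \<preceq> G2"
    using mAdd.IH mAdd.prems by blast
  have "mtyped (env_ins k (M1 + M2) (Gu1 + Gu2)) u (add_mset \<sigma> N) (nu1 + nu2)"
    using typed_mtyped.mAdd[OF a(1) b(1)] env_ins_add by simp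
  moreover have "mtyped (Gs1 + Gs2) s (M1 + M2) (ms1 + ms2)" using mtyped_join[OF a(2) b(2)] .
  moreover have "(Gu1 + Gu2) + (Gs1 + Gs2) \<preceq> G"
    using env_le_trans[OF env_le_add4[OF a(3) b(3)] \<open>G1 + G2 \<preceq> G\<close>] .
  ultimately show ?case by blast
qed auto

lemma anti_subst:
  "is_lambda t \<Longrightarrow> typed G (subst t k s) \<tau> n \<Longrightarrow>
   \<exists>M Gt Gs nt ms. typed (env_ins k M Gt) t \<tau> nt \<and> mtyped Gs s M ms \<and> Gt + Gs \<preceq> G"
proof (induction t arbitrary: G \<tau> n k s)
  case (Var i)
  show ?case by (rule anti_subst_Var[OF Var.prems(2)])
next
  case (Lam t)
  from Lam.prems(2) obtain K \<tau>' n' where \<tau>: "\<tau> = Arr K \<tau>'"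
    and body: "typed (case_nat K G) (subst t (Suc k) (lift 0 s)) \<tau>' n'"
    by (auto elim: typed_LamE)
  obtain M Gt Gs nt ms where a: "typed (env_ins (Suc k) M Gt) t \<tau>' nt" "mtyped Gs (lift 0 s) M ms"
    "Gt + Gs \<preceq> case_nat K G"
    using Lam.IH[OF _ body] Lam.prems(1) by auto
  then have le: "Gt 0 + Gs 0 \<subseteq># K" "env_tl Gt + env_tl Gs \<preceq> G"
    by (auto simp: env_le_case_nat_iff plus_fun_apply)
  have s': "mtyped (env_tl Gs) s M ms"
    using mtyped_lift0_pullback[of "Gs 0" "env_tl Gs"] a(2) by simp
  have "typed (case_nat (Gt 0) (env_ins k M (env_tl Gt))) t \<tau>' nt" using a(1) by (simp add: env_ins_Suc)
  then have "typed (case_nat K (env_ins k M (env_tl Gt))) t \<tau>' nt"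
    using typed_weaken case_nat_mono[OF submset_addD(1)[OF le(1)] env_le_refl] by blast
  then have "typed (env_ins k M (env_tl Gt)) (Lam t) \<tau> (Suc nt)" unfolding \<tau> by (rule tLam)
  then show ?case using s' le(2) by blast
next
  case (App t u)
  from App.prems(2) obtain G1 N n1 G2 m where h: "typed G1 (subst t k s) (Arr N \<tau>) n1" "N \<noteq> {#}"
    "mtyped G2 (subst u k s) N m" "G1 + G2 \<preceq> G"
    by (auto elim: typed_AppE)
  obtain M1 Gt1 Gs1 nt1 ms1 where a: "typed (env_ins k M1 Gt1) t (Arr N \<tau>) nt1" "mtyped Gs1 s M1 ms1"
    "Gt1 + Gs1 \<preceq> G1"
    using App.IH(1)[OF _ h(1)] App.prems(1) by auto
  obtain M2 Gu2 Gs2 nu2 ms2 where b: "mtyped (env_ins k M2 Gu2) u N nu2" "mtyped Gs2 s M2 ms2"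
    "Gu2 + Gs2 \<preceq> G2"
    using mtyped_anti_subst[OF h(3)] App.IH(2) App.prems(1) by (metis is_lambda.simps(3))
  have "typed (env_ins k (M1 + M2) (Gt1 + Gu2)) (App t u) \<tau> (Suc (nt1 + nu2))"
    using tApp[OF a(1) h(2) b(1)] env_ins_add by simp
  moreover have "mtyped (Gs1 + Gs2) s (M1 + M2) (ms1 + ms2)" using mtyped_join[OF a(2) b(2)] .
  moreover have "(Gt1 + Gu2) + (Gs1 + Gs2) \<preceq> G"
    using env_le_trans[OF env_le_add4[OF a(3) b(3)] h(4)] .
  ultimately show ?case by blast
qed simp

text \<open>hred s r a: s is a lambda-term of the form (\<lambda>x.b) a w1 ... wk and r is its head
  reduct b{x/a} w1 ... wk; the erased-or-not argument a is recorded.\<close>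

inductive hred :: "trm \<Rightarrow> trm \<Rightarrow> trm \<Rightarrow> bool" where
  base: "is_lambda b \<Longrightarrow> hred (App (Lam b) a) (subst b 0 a) a"
| app:  "hred s r a \<Longrightarrow> hred (App s w) (App r w) a"

text \<open>If the head reduct is typable and the argument of the head redex is typable (needed in
  case the argument is erased), the head redex is typable with the same type.\<close>

lemma hred_expand:
  "hred s r a \<Longrightarrow> typed G r \<tau> n \<Longrightarrow> typed Ga a \<sigma> na \<Longrightarrow> \<exists>G' n'. typed G' s \<tau> n'"
proof (induction arbitrary: G \<tau> n rule: hred.induct)
  case (base b a)
  obtain M Gt Gs nt ms where h: "typed (case_nat M Gt) b \<tau> nt" "mtyped Gs a M ms"
    using anti_subst[OF base.hyps base.prems(1)] by (auto simp: env_ins_0)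
  show ?case
  proof (cases "M = {#}")
    case True
    have "typed (case_nat {#\<sigma>#} Gt) b \<tau> nt"
      using typed_weaken[OF h(1)] case_nat_mono[of M "{#\<sigma>#}" Gt Gt] True by simp
    then have "typed Gt (Lam b) (Arr {#\<sigma>#} \<tau>) (Suc nt)" by (rule tLam)
    moreover have "{#\<sigma>#} \<noteq> {#}" by simp
    ultimately show ?thesis using tApp[OF _ _ mtyped_single[OF base.prems(2)] env_le_refl] by blast
  next
    case False
    from tApp[OF tLam[OF h(1)] False h(2) env_le_refl] show ?thesis by blast
  qed
next
  case (app s r a w)
  from app.prems(1) obtain G1 N n1 G2 m where h: "typed G1 r (Arr N \<tau>) n1" "N \<noteq> {#}" "mtyped G2 w N m"
    by (auto elim: typed_AppE)
  obtain G1' n1' where "typed G1' s (Arr N \<tau>) n1'" using app.IH[OF h(1) app.prems(2)] by blast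
  from tApp[OF this h(2,3) env_le_refl] show ?case by blast
qed

inductive isub :: "trm \<Rightarrow> trm \<Rightarrow> bool" where
  "isub t (Lam t)" | "isub t (App t u)" | "isub u (App t u)" | "isub t (Sub t u)" | "isub u (Sub t u)"

abbreviation psub :: "trm \<Rightarrow> trm \<Rightarrow> bool" where
  "psub \<equiv> isub\<^sup>+\<^sup>+"

lemma psub_size: "psub a b \<Longrightarrow> size a < size b"
proof -
  have step: "isub a b \<Longrightarrow> size a < size b" for a b by (induction rule: isub.induct) auto
  show "psub a b \<Longrightarrow> size a < size b" by (induction rule: tranclp_induct) (auto dest: step)
qed

lemma psub_beta: "psub s x \<Longrightarrow> beta s s' \<Longrightarrow> \<exists>x'. beta x x' \<and> psub s' x'"
proof -
  have isub_beta: "isub s x \<Longrightarrow> beta s s' \<Longrightarrow> \<exists>x'. beta x x' \<and> isub s' x'" for s x s'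
    unfolding beta_def by (induction rule: isub.induct) (blast intro: isub.intros ctx.intros)+
  show "psub s x \<Longrightarrow> beta s s' \<Longrightarrow> \<exists>x'. beta x x' \<and> psub s' x'"
  proof (induction arbitrary: s' rule: tranclp_induct)
    case (base y)
    then show ?case using isub_beta by blast
  next
    case (step y z)
    then obtain y' where "beta y y'" "psub s' y'" by blast
    moreover obtain z' where "beta z z'" "isub y' z'" using isub_beta[OF step(2) \<open>beta y y'\<close>] by blast
    ultimately show ?case by (meson tranclp.trancl_into_trancl)
  qed
qed

text \<open>Since beta-reduction commutes with taking subterms, strong normalisation for beta
  supports induction along beta-steps and proper subterms simultaneously.\<close>

lemma SN_beta_induct:
  assumes "SN beta t"
    and step: "\<And>s. (\<And>s'. beta s s' \<Longrightarrow> P s') \<Longrightarrow> (\<And>s'. psub s' s \<Longrightarrow> P s') \<Longrightarrow> P s"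
  shows "P t"
proof -
  have "P s" if "Wellfounded.accp (conversep beta) x" "s = x \<or> psub s x" for x s
    using that
  proof (induction arbitrary: s rule: Wellfounded.accp_induct_rule)
    case (1 x)
    note IH = 1(2)
    from 1(3) show ?case
    proof (induction s rule: measure_induct_rule[of size])
      case (less s)
      show ?case
      proof (rule step)
        fix s' assume "beta s s'"
        from less.prems show "P s'"
        proof
          assume "s = x"
          then show ?thesis using IH \<open>beta s s'\<close> by auto
        next
          assume "psub s x"
          then obtain x' where "beta x x'" "psub s' x'" using psub_beta \<open>beta s s'\<close> by blast
          then show ?thesis using IH by auto
        qed
      next
        fix s' assume "psub s' s"
        then show "P s'" using less psub_size by (meson tranclp_trans)
      qed
    qed
  qed
  then show ?thesis using assms(1) by (auto simp: SN_def)
qed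

lemma is_lambda_subst: "is_lambda t \<Longrightarrow> is_lambda u \<Longrightarrow> is_lambda (subst t k u)"
proof -
  have "is_lambda (lift k t) = is_lambda t" for k t by (induction t arbitrary: k) auto
  then show "is_lambda t \<Longrightarrow> is_lambda u \<Longrightarrow> is_lambda (subst t k u)"
    by (induction t arbitrary: k u) auto
qed

lemma beta_is_lambda: "beta s s' \<Longrightarrow> is_lambda s \<Longrightarrow> is_lambda s'"
  unfolding beta_def
  by (induction rule: ctx.induct) (auto elim!: beta_rule.cases intro: is_lambda_subst)

lemma psub_is_lambda: "psub a b \<Longrightarrow> is_lambda b \<Longrightarrow> is_lambda a"
proof -
  have step: "isub a b \<Longrightarrow> is_lambda b \<Longrightarrow> is_lambda a" for a b by (induction rule: isub.induct) auto
  show "psub a b \<Longrightarrow> is_lambda b \<Longrightarrow> is_lambda a" by (induction rule: tranclp_induct) (meson step)+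
qed

fun neutral :: "trm \<Rightarrow> bool" where
  "neutral (Var i) = True"
| "neutral (App t u) = neutral t"
| "neutral _ = False"

lemma hred_exists:
  "is_lambda (App s1 s2) \<Longrightarrow> \<not> neutral s1 \<Longrightarrow> \<exists>r a. hred (App s1 s2) r a \<and> psub a (App s1 s2)"
proof (induction s1 arbitrary: s2)
  case (Lam b)
  then have "hred (App (Lam b) s2) (subst b 0 s2) s2" by (auto intro: hred.base)
  moreover have "psub s2 (App (Lam b) s2)" by (auto intro: isub.intros)
  ultimately show ?case by blast
next
  case (App t u)
  have "\<exists>r a. hred (App t u) r a \<and> psub a (App t u)" using App.IH(1)[of u] App.prems by simp
  then obtain r a where "hred (App t u) r a" "psub a (App t u)" by blast
  moreover have "psub (App t u) (App (App t u) s2)" by (auto intro: isub.intros)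
  ultimately show ?case by (meson hred.app tranclp_trans)
qed auto

lemma hred_beta: "hred s r a \<Longrightarrow> beta s r"
  unfolding beta_def by (induction rule: hred.induct) (auto intro: ctx.root ctx.appl beta_rule.intros)

definition typable :: "trm \<Rightarrow> bool" where
  "typable t \<longleftrightarrow> (\<exists>G \<tau> n. typed G t \<tau> n)"

definition typable_at_all :: "trm \<Rightarrow> bool" where
  "typable_at_all t \<longleftrightarrow> (\<forall>\<tau>. \<exists>G n. typed G t \<tau> n)"

lemma typable_at_all_Var: "typable_at_all (Var i)"
  unfolding typable_at_all_def
proof
  fix \<tau>
  have "typed (\<lambda>j. if j = i then {#\<tau>#} else {#}) (Var i) \<tau> (Suc 0)" by (rule tVar) simp
  then show "\<exists>G n. typed G (Var i) \<tau> n" by blast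
qed

lemma typable_Lam: "typable b \<Longrightarrow> typable (Lam b)"
  unfolding typable_def
proof (elim exE)
  fix G \<tau> n assume "typed G b \<tau> n"
  then have "typed (case_nat (G 0) (env_tl G)) b \<tau> n" by simp
  then have "typed (env_tl G) (Lam b) (Arr (G 0) \<tau>) (Suc n)" by (rule tLam)
  then show "\<exists>G \<tau> n. typed G (Lam b) \<tau> n" by blast
qed

lemma typable_at_all_App: "typable_at_all s1 \<Longrightarrow> typable s2 \<Longrightarrow> typable_at_all (App s1 s2)"
  unfolding typable_at_all_def typable_def
proof (elim exE, intro allI)
  fix \<tau> G2 \<sigma> n2 assume all: "\<forall>\<tau>. \<exists>G n. typed G s1 \<tau> n" and s2: "typed G2 s2 \<sigma> n2"
  then obtain G1 n1 where "typed G1 s1 (Arr {#\<sigma>#} \<tau>) n1" by blast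
  from tApp[OF this _ mtyped_single[OF s2] env_le_refl] show "\<exists>G n. typed G (App s1 s2) \<tau> n" by auto
qed

lemma SN_beta_typable:
  assumes "SN beta t"
  shows "is_lambda t \<longrightarrow> typable t \<and> (neutral t \<longrightarrow> typable_at_all t)"
proof (rule SN_beta_induct[OF assms])
  fix s
  assume IH_beta: "\<And>s'. beta s s' \<Longrightarrow> is_lambda s' \<longrightarrow> typable s' \<and> (neutral s' \<longrightarrow> typable_at_all s')"
    and IH_sub: "\<And>s'. psub s' s \<Longrightarrow> is_lambda s' \<longrightarrow> typable s' \<and> (neutral s' \<longrightarrow> typable_at_all s')"
  show "is_lambda s \<longrightarrow> typable s \<and> (neutral s \<longrightarrow> typable_at_all s)"
  proof
    assume lam: "is_lambda s"
    have sub: "psub a s \<Longrightarrow> typable a \<and> (neutral a \<longrightarrow> typable_at_all a)" for a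
      using IH_sub psub_is_lambda lam by blast
    have at_all_typable: "typable_at_all a \<Longrightarrow> typable a" for a
      unfolding typable_at_all_def typable_def by blast
    show "typable s \<and> (neutral s \<longrightarrow> typable_at_all s)"
    proof (cases s)
      case (Var i)
      then show ?thesis using typable_at_all_Var at_all_typable by auto
    next
      case (Lam b)
      then show ?thesis using sub[of b] typable_Lam by (auto intro: isub.intros)
    next
      case (App s1 s2)
      show ?thesis
      proof (cases "neutral s1")
        case True
        then have "typable_at_all s" using sub[of s1] sub[of s2] App typable_at_all_App
          by (auto intro: isub.intros)
        then show ?thesis using at_all_typable by blast
      next
        case False
        text \<open>Expand the head redex: its reduct is typable by induction along beta, and its
          argument is typable as a proper subterm.\<close>
        obtain r a where h: "hred s r a" "psub a s" using hred_exists[OF lam[unfolded App] False] App by auto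
        obtain G \<tau> n where "typed G r \<tau> n"
          using IH_beta[OF hred_beta[OF h(1)]] beta_is_lambda[OF hred_beta[OF h(1)] lam]
          unfolding typable_def by blast
        moreover obtain Ga \<sigma> na where "typed Ga a \<sigma> na" using sub[OF h(2)] unfolding typable_def by blast
        ultimately have "typable s" using hred_expand[OF h(1)] unfolding typable_def by blast
        then show ?thesis using App False by simp
      qed
    qed (use lam in simp)
  qed
qed

theorem corollary53:
  assumes "is_lambda t" and "SN beta t"
  shows "SN es_red t"
proof -
  have "typable t" using SN_beta_typable[OF assms(2)] assms(1) by blast
  then obtain G \<tau> n where "typed G t \<tau> n" unfolding typable_def by blast
  then show ?thesis by (rule typed_SN)
qed

end
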